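(* Let $m\ge 1$, $q\ge 1$, and let $(A_0,\ldots,A_q)$ be a symmetric Clifford system on $\mathbb{R}^{2m}$. Define the cubic polynomial on $\mathbb{R}^{2m}\oplus\mathbb{R}^{q+1}$ $$\Phi(x):=y^{T}A_z y=\sum_{i=0}^q z_i\, y^T A_i y,\qquad x=(y,z)\in\mathbb{R}^{2m}\oplus\mathbb{R}^{q+1},$$ where $A_z:=\sum_{i=0}^q z_iA_i$. Then $\Phi$ is a radial minimal cubic; more precisely, $$L(\Phi)=-8|x|^2\,\Phi,$$ where $|x|^2=|y|^2+|z|^2$.
   Context: A (symmetric) Clifford system on $\mathbb{R}^{2m}$ with $q\ge1$ is a tuple $(A_0,\ldots,A_q)$ of symmetric linear endomorphisms (symmetric $2m\times 2m$ real matrices) satisfying $A_iA_j+A_jA_i=2\delta_{ij}I$ for all $0\le i,j\le q$, where $I$ is the identity. For a polynomial $f$ on $\mathbb{R}^n$, the operator $L$ is $L(f):=|\nabla f|^2\Delta f-\sum_{i,j=1}^n f_{x_i}f_{x_j}f_{x_ix_j}$. A homogeneous cubic polynomial $f$ is called a minimal cubic if $L(f)$ is divisible by $f$ in the polynomial ring, and a radial minimal cubic if $L(f)=c|x|^2 f$ for some constant $c\in\mathbb{R}$. *)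

theory Defs
  imports "HOL-Analysis.Analysis"
begin

text \<open>Symmetric Clifford system indexed by a finite type 'k (playing the role of {0..q}),
  acting on real^'n: symmetric matrices with A_i A_j + A_j A_i = 2 delta_ij I.\<close>
definition clifford_system :: "('k::finite \<Rightarrow> real^'n^'n) \<Rightarrow> bool" where
  "clifford_system A \<longleftrightarrow>
     (\<forall>i. transpose (A i) = A i) \<and>
     (\<forall>i j. A i ** A j + A j ** A i = (if i = j then 2 *\<^sub>R mat 1 else 0))"

definition pdiff :: "'d::finite \<Rightarrow> (real^'d \<Rightarrow> real) \<Rightarrow> real^'d \<Rightarrow> real" where
  "pdiff i f x = deriv (\<lambda>t. f (x + t *\<^sub>R axis i 1)) 0"

definition Lop :: "(real^'d::finite \<Rightarrow> real) \<Rightarrow> real^'d \<Rightarrow> real" where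
  "Lop f x = (\<Sum>i\<in>UNIV. (pdiff i f x)^2) * (\<Sum>i\<in>UNIV. pdiff i (pdiff i f) x)
     - (\<Sum>i\<in>UNIV. \<Sum>j\<in>UNIV. pdiff i f x * pdiff j f x * pdiff i (pdiff j f) x)"

text \<open>The cubic Phi(y,z) = sum_i z_i y^T A_i y on R^{2m} (+) R^{q+1}, with coordinates
  Inl a for y and Inr i for z.\<close>
definition Phi :: "('k::finite \<Rightarrow> real^'n::finite^'n) \<Rightarrow> real^('n + 'k) \<Rightarrow> real" where
  "Phi A x = (let y = (\<chi> a. x $ Inl a); z = (\<chi> i. x $ Inr i)
              in \<Sum>i\<in>UNIV. z $ i * (y \<bullet> (A i *v y)))"

end

theory Submission
  imports Defs
begin

text \<open>Write x = (y, z) and A_z = sum_i z_i A_i, so that Phi(x) = y . A_z y. The gradient of Phi is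
  (2 A_z y, (y . A_i y)_i) and its Hessian has the blocks 2 A_z, 2 A_i y and 0. The Laplacian
  2 tr A_z vanishes because a symmetric involution that anticommutes with another one is traceless.
  In the contraction sum_{k,l} f_k f_l f_kl the yy-block gives 8 A_z y . A_z (A_z y) = 8 |z|^2 Phi,
  since A_z^2 = |z|^2 I, and the two mixed blocks give 8 sum_i (y . A_i y) (A_z y . A_i y) = 8 |y|^2 Phi,
  since A_z y . A_i y = z_i |y|^2. Hence L(Phi) = 0 - 8 |x|^2 Phi.\<close>

lemma sum_UNIV_Plus:
  "(\<Sum>k\<in>UNIV. f k) = (\<Sum>a\<in>UNIV. f (Inl a)) + (\<Sum>b\<in>UNIV. f (Inr b))"
  for f :: "'a::finite + 'b::finite \<Rightarrow> 'c::comm_monoid_add"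
  by (simp flip: UNIV_Plus_UNIV add: sum.Plus comp_def)

lemma axis_nth_if: "axis i c $ j = (if j = i then c else 0)"
  by (simp add: axis_def)

lemma matrix_vector_mult_axis_nth: "(M *v axis b 1) $ a = M $ a $ b"
  by (simp add: matrix_vector_mult_def axis_nth_if if_distrib cong: if_cong)

lemma symmetric_inner_matrix_vector_mult:
  fixes M :: "real^'n::finite^'n"
  assumes "transpose M = M"
  shows "u \<bullet> (M *v v) = v \<bullet> (M *v u)"
  by (metis assms dot_lmul_matrix inner_commute vector_transpose_matrix)

lemma sum_matrix_vector_mult: "(\<Sum>i\<in>S. M i) *v v = (\<Sum>i\<in>S. M i *v v)"
  by (induction S rule: infinite_finite_induct) (auto simp: matrix_vector_mult_add_rdistrib)

lemma matrix_vector_mult_sum: "M *v (\<Sum>i\<in>S. v i) = (\<Sum>i\<in>S. M *v v i)"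
  by (induction S rule: infinite_finite_induct) (auto simp: matrix_vector_right_distrib)

lemma sum_sum_matrix_bilinear:
  "(\<Sum>a\<in>UNIV. \<Sum>b\<in>UNIV. u $ a * v $ b * M $ b $ a) = v \<bullet> (M *v u)"
  for M :: "real^'m::finite^'n::finite"
  by (simp add: inner_vec_def matrix_vector_mult_def sum_distrib_left)
    (subst sum.swap, simp add: mult_ac)

lemma pdiff_eq_derivative:
  assumes "(f has_derivative f') (at x)"
  shows "pdiff i f x = f' (axis i 1)"
proof -
  have "((\<lambda>t::real. x + t *\<^sub>R axis i 1) has_derivative (\<lambda>t. t *\<^sub>R axis i 1)) (at 0)"
    by (auto intro!: derivative_eq_intros)
  moreover have "(f has_derivative f') (at (x + (0::real) *\<^sub>R axis i 1))"
    using assms by simp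
  ultimately have "((\<lambda>t. f (x + t *\<^sub>R axis i 1)) has_derivative (\<lambda>t. f' (t *\<^sub>R axis i 1))) (at 0)"
    by (rule has_derivative_compose)
  moreover have "(\<lambda>t. f' (t *\<^sub>R axis i 1)) = (*) (f' (axis i 1))"
    using linear_scale[OF has_derivative_linear[OF assms]] by (auto simp: mult.commute)
  ultimately show ?thesis
    unfolding pdiff_def by (intro DERIV_imp_deriv) (simp add: has_field_derivative_def)
qed

lemma has_derivative_vec_nth [derivative_intros]:
  "(f has_derivative f') F \<Longrightarrow> ((\<lambda>x. f x $ i) has_derivative (\<lambda>h. f' h $ i)) F"
  by (rule bounded_linear.has_derivative[OF bounded_linear_vec_nth])

lemma has_derivative_matrix_vector_mult [derivative_intros]:
  "(f has_derivative f') F \<Longrightarrow> ((\<lambda>x. M *v f x) has_derivative (\<lambda>h. M *v f' h)) F"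
  for M :: "real^'n::finite^'m::finite"
  by (rule bounded_linear.has_derivative[OF matrix_vector_mul_bounded_linear])

definition ypart :: "real^('n::finite + 'k::finite) \<Rightarrow> real^'n" where
  "ypart x = (\<chi> a. x $ Inl a)"

definition zpart :: "real^('n::finite + 'k::finite) \<Rightarrow> real^'k" where
  "zpart x = (\<chi> i. x $ Inr i)"

lemma bounded_linear_ypart: "bounded_linear ypart"
proof -
  have "linear ypart" by (rule linearI) (auto simp: ypart_def vec_eq_iff)
  then show ?thesis by (simp add: linear_conv_bounded_linear)
qed

lemma has_derivative_ypart [derivative_intros]:
  "(f has_derivative f') F \<Longrightarrow> ((\<lambda>x. ypart (f x)) has_derivative (\<lambda>h. ypart (f' h))) F"
  by (rule bounded_linear.has_derivative[OF bounded_linear_ypart])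

lemma ypart_axis_Inl [simp]: "ypart (axis (Inl a) c) = axis a c"
  by (simp add: ypart_def axis_def vec_eq_iff)

lemma ypart_axis_Inr [simp]: "ypart (axis (Inr i) c) = 0"
  by (simp add: ypart_def axis_def vec_eq_iff)

lemma zpart_axis_Inl [simp]: "zpart (axis (Inl a) c) = 0"
  by (simp add: zpart_def axis_def vec_eq_iff)

lemma zpart_axis_Inr [simp]: "zpart (axis (Inr i) c) = axis i c"
  by (simp add: zpart_def axis_def vec_eq_iff)

lemma norm_ypart_zpart: "(norm x)\<^sup>2 = (norm (ypart x))\<^sup>2 + (norm (zpart x))\<^sup>2"
  by (simp add: power2_norm_eq_inner inner_vec_def sum_UNIV_Plus ypart_def zpart_def)

definition clifford_comb :: "('k::finite \<Rightarrow> real^'n::finite^'n) \<Rightarrow> real^'k \<Rightarrow> real^'n^'n" where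
  "clifford_comb A z = (\<Sum>i\<in>UNIV. z $ i *\<^sub>R A i)"

lemma clifford_comb_component: "clifford_comb A z $ a $ b = (\<Sum>i\<in>UNIV. z $ i * A i $ a $ b)"
  by (simp add: clifford_comb_def)

lemma clifford_comb_0 [simp]: "clifford_comb A 0 = 0"
  by (simp add: clifford_comb_def)

lemma clifford_comb_axis [simp]: "clifford_comb A (axis j 1) = A j"
proof -
  have "(\<Sum>i\<in>UNIV. axis j 1 $ i *\<^sub>R A i) = (\<Sum>i\<in>UNIV. if i = j then A i else 0)"
    by (intro sum.cong) (auto simp: axis_nth_if)
  then show ?thesis by (simp add: clifford_comb_def)
qed

lemma clifford_comb_mult_vec: "clifford_comb A z *v v = (\<Sum>i\<in>UNIV. z $ i *\<^sub>R (A i *v v))"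
  by (simp add: clifford_comb_def sum_matrix_vector_mult flip: scaleR_matrix_vector_assoc)

lemma trace_clifford_comb: "trace (clifford_comb A z) = (\<Sum>i\<in>UNIV. z $ i * trace (A i))"
  unfolding trace_def clifford_comb_component sum_distrib_left by (rule sum.swap)

lemma clifford_system_transpose: "clifford_system A \<Longrightarrow> transpose (A i) = A i"
  by (simp add: clifford_system_def)

lemma clifford_system_anticomm_vec:
  assumes "clifford_system A"
  shows "A i *v (A j *v v) + A j *v (A i *v v) = (if i = j then 2 *\<^sub>R v else 0)"
proof -
  have "(A i ** A j + A j ** A i) *v v = (if i = j then 2 *\<^sub>R mat 1 else 0) *v v"
    using assms by (simp add: clifford_system_def)
  then show ?thesis
    by (auto simp: matrix_vector_mult_add_rdistrib matrix_vector_mul_assoc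
        simp flip: scaleR_matrix_vector_assoc)
qed

lemma clifford_system_inner:
  assumes "clifford_system A"
  shows "(A i *v y) \<bullet> (A j *v y) = (if i = j then y \<bullet> y else 0)"
proof -
  note sym = symmetric_inner_matrix_vector_mult[OF clifford_system_transpose[OF assms]]
  have "(A i *v y) \<bullet> (A j *v y) = y \<bullet> (A i *v (A j *v y))"
    using sym[of "A j *v y" i y] by (simp add: inner_commute)
  moreover have "(A i *v y) \<bullet> (A j *v y) = y \<bullet> (A j *v (A i *v y))"
    using sym[of "A i *v y" j y] by simp
  ultimately have "2 * ((A i *v y) \<bullet> (A j *v y)) = y \<bullet> (A i *v (A j *v y) + A j *v (A i *v y))"
    by (simp add: inner_add_right)
  then show ?thesis
    by (simp add: clifford_system_anticomm_vec[OF assms] split: if_splits)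
qed

lemma clifford_comb_inner:
  assumes "clifford_system A"
  shows "(clifford_comb A z *v y) \<bullet> (A j *v y) = z $ j * (y \<bullet> y)"
  by (simp add: clifford_comb_mult_vec inner_sum_left clifford_system_inner[OF assms]
      if_distrib cong: if_cong)

lemma clifford_comb_square:
  assumes "clifford_system A"
  shows "clifford_comb A z *v (clifford_comb A z *v v) = (z \<bullet> z) *\<^sub>R v"
proof -
  let ?S = "\<Sum>i\<in>UNIV. \<Sum>j\<in>UNIV. (z $ i * z $ j) *\<^sub>R (A j *v (A i *v v))"
  have expand: "clifford_comb A z *v (clifford_comb A z *v v) = ?S"
    by (simp add: clifford_comb_mult_vec matrix_vector_mult_sum scaleR_sum_right
        matrix_vector_mult_scaleR)
  have swap: "?S = (\<Sum>i\<in>UNIV. \<Sum>j\<in>UNIV. (z $ i * z $ j) *\<^sub>R (A i *v (A j *v v)))"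
    by (subst sum.swap) (simp add: mult.commute)
  \<comment> \<open>symmetrize the double sum so that only the anticommutators appear\<close>
  have "?S + ?S = (\<Sum>i\<in>UNIV. \<Sum>j\<in>UNIV.
      (z $ i * z $ j) *\<^sub>R (A i *v (A j *v v) + A j *v (A i *v v)))"
    by (subst (2) swap) (simp add: sum.distrib scaleR_add_right)
  also have "\<dots> = (\<Sum>i\<in>UNIV. (2 * (z $ i * z $ i)) *\<^sub>R v)"
    by (simp add: clifford_system_anticomm_vec[OF assms] if_distrib mult.commute cong: if_cong)
  also have "\<dots> = 2 *\<^sub>R ((z \<bullet> z) *\<^sub>R v)"
    by (simp add: inner_vec_def scaleR_sum_left scaleR_sum_right)
  finally have "2 *\<^sub>R ?S = 2 *\<^sub>R ((z \<bullet> z) *\<^sub>R v)"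
    by (simp only: scaleR_2)
  then show ?thesis by (simp add: expand del: scaleR_scaleR)
qed

lemma clifford_system_trace_eq_0:
  assumes "clifford_system A" and "j \<noteq> i"
  shows "trace (A i) = 0"
proof -
  have anticomm: "A i ** A j + A j ** A i = 0" and "A j ** A j + A j ** A j = 2 *\<^sub>R mat 1"
    using assms unfolding clifford_system_def by auto
  then have square: "A j ** A j = mat 1"
    by (simp flip: scaleR_2)
  \<comment> \<open>the trace is invariant under conjugation by the involution A j, which negates A i\<close>
  have "trace (A i) = trace ((A i ** A j) ** A j)"
    by (simp add: matrix_mul_assoc[symmetric] square matrix_mul_rid)
  also have "\<dots> = trace (A j ** A i ** A j)"
    by (subst trace_mul_sym) (simp add: matrix_mul_assoc)
  finally have conj: "trace (A i) = trace (A j ** A i ** A j)" .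
  have "trace (A i) + trace (A j ** A i ** A j) = trace (A j ** (A i ** A j + A j ** A i))"
    by (simp add: trace_add matrix_add_ldistrib matrix_mul_assoc square matrix_mul_lid add.commute)
  then have "2 * trace (A i) = trace (A j ** 0)"
    by (simp add: anticomm flip: conj)
  then show ?thesis
    by (simp add: trace_def)
qed

lemma Phi_eq: "Phi A x = (\<Sum>i\<in>UNIV. x $ Inr i * (ypart x \<bullet> (A i *v ypart x)))"
  by (simp add: Phi_def ypart_def Let_def)

lemma Phi_clifford_comb: "Phi A x = ypart x \<bullet> (clifford_comb A (zpart x) *v ypart x)"
  by (simp add: Phi_eq clifford_comb_mult_vec inner_sum_right zpart_def)

lemma has_derivative_Phi:
  "(Phi A has_derivative (\<lambda>h. \<Sum>i\<in>UNIV. h $ Inr i * (ypart x \<bullet> (A i *v ypart x))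
     + x $ Inr i * (ypart h \<bullet> (A i *v ypart x) + ypart x \<bullet> (A i *v ypart h)))) (at x)"
  unfolding Phi_eq [abs_def] by (auto intro!: derivative_eq_intros simp: algebra_simps)

lemma pdiff_Phi_Inl:
  assumes "\<And>i. transpose (A i) = A i"
  shows "pdiff (Inl a) (Phi A) = (\<lambda>x. 2 * (clifford_comb A (zpart x) *v ypart x) $ a)"
proof
  fix x
  have "u \<bullet> (A i *v axis a 1) = (A i *v u) $ a" for i u
    by (simp add: symmetric_inner_matrix_vector_mult[OF assms, where v = "axis a 1"] inner_axis')
  then show "pdiff (Inl a) (Phi A) x = 2 * (clifford_comb A (zpart x) *v ypart x) $ a"
    by (simp add: pdiff_eq_derivative[OF has_derivative_Phi] clifford_comb_mult_vec zpart_def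
        inner_axis' sum_distrib_left axis_nth_if mult.left_commute)
qed

lemma pdiff_Phi_Inr: "pdiff (Inr j) (Phi A) = (\<lambda>x. ypart x \<bullet> (A j *v ypart x))"
  by (simp add: fun_eq_iff pdiff_eq_derivative[OF has_derivative_Phi] axis_nth_if mult_if_delta)

lemma has_derivative_clifford_comb_mult_vec:
  "((\<lambda>x. clifford_comb A (zpart x) *v ypart x) has_derivative
     (\<lambda>h. clifford_comb A (zpart h) *v ypart x + clifford_comb A (zpart x) *v ypart h)) (at x)"
  unfolding clifford_comb_mult_vec
  by (auto intro!: derivative_eq_intros simp: zpart_def scaleR_add_right sum.distrib)

lemma has_derivative_pdiff_Phi_Inl:
  assumes "\<And>i. transpose (A i) = A i"
  shows "(pdiff (Inl a) (Phi A) has_derivative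
     (\<lambda>h. 2 * (clifford_comb A (zpart h) *v ypart x + clifford_comb A (zpart x) *v ypart h) $ a)) (at x)"
  unfolding pdiff_Phi_Inl[OF assms]
  by (intro has_derivative_mult_right has_derivative_vec_nth has_derivative_clifford_comb_mult_vec)

lemma pdiff_pdiff_Phi_Inl_Inl:
  assumes "\<And>i. transpose (A i) = A i"
  shows "pdiff (Inl b) (pdiff (Inl a) (Phi A)) x = 2 * clifford_comb A (zpart x) $ a $ b"
  by (simp add: pdiff_eq_derivative[OF has_derivative_pdiff_Phi_Inl[OF assms]]
      matrix_vector_mult_axis_nth)

lemma pdiff_pdiff_Phi_Inl_Inr:
  assumes "\<And>i. transpose (A i) = A i"
  shows "pdiff (Inr j) (pdiff (Inl a) (Phi A)) x = 2 * (A j *v ypart x) $ a"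
  by (simp add: pdiff_eq_derivative[OF has_derivative_pdiff_Phi_Inl[OF assms]])

lemma has_derivative_quadratic_ypart:
  "((\<lambda>x. ypart x \<bullet> (M *v ypart x)) has_derivative
     (\<lambda>h. ypart h \<bullet> (M *v ypart x) + ypart x \<bullet> (M *v ypart h))) (at x)"
  by (auto intro!: derivative_eq_intros)

lemma pdiff_pdiff_Phi_Inr_Inl:
  assumes "transpose (A j) = A j"
  shows "pdiff (Inl b) (pdiff (Inr j) (Phi A)) x = 2 * (A j *v ypart x) $ b"
  unfolding pdiff_Phi_Inr pdiff_eq_derivative[OF has_derivative_quadratic_ypart]
  by (simp add: symmetric_inner_matrix_vector_mult[OF assms, where v = "axis b 1"] inner_axis')

lemma pdiff_pdiff_Phi_Inr_Inr: "pdiff (Inr i) (pdiff (Inr j) (Phi A)) x = 0"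
  unfolding pdiff_Phi_Inr pdiff_eq_derivative[OF has_derivative_quadratic_ypart] by simp

lemma laplacian_Phi:
  fixes A :: "'k::finite \<Rightarrow> real^'n::finite^'n"
  assumes "clifford_system A" and "CARD('k) \<ge> 2"
  shows "(\<Sum>k\<in>UNIV. pdiff k (pdiff k (Phi A)) x) = 0"
proof -
  have traceless: "trace (A i) = 0" for i
  proof -
    have "\<exists>j. j \<noteq> i"
    proof (rule ccontr)
      assume "\<nexists>j. j \<noteq> i"
      then have "(UNIV :: 'k set) = {i}" by auto
      then have "CARD('k) = 1" by (metis One_nat_def card_1_singleton_iff)
      with assms(2) show False by simp
    qed
    then show ?thesis using clifford_system_trace_eq_0[OF assms(1)] by blast
  qed
  have "(\<Sum>k\<in>UNIV. pdiff k (pdiff k (Phi A)) x) = 2 * trace (clifford_comb A (zpart x))"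
    by (simp add: sum_UNIV_Plus pdiff_pdiff_Phi_Inl_Inl pdiff_pdiff_Phi_Inr_Inr
        clifford_system_transpose[OF assms(1)] trace_def sum_distrib_left)
  then show ?thesis by (simp add: trace_clifford_comb traceless)
qed

lemma Phi_gradient_Hessian_contraction:
  assumes "clifford_system A"
  shows "(\<Sum>k\<in>UNIV. \<Sum>l\<in>UNIV. pdiff k (Phi A) x * pdiff l (Phi A) x * pdiff k (pdiff l (Phi A)) x)
    = 8 * (norm x)\<^sup>2 * Phi A x"
proof -
  note symmetric = clifford_system_transpose[OF assms]
  define y z where "y = ypart x" and "z = zpart x"
  define M where "M = clifford_comb A z"
  define w where "w = M *v y"
  define g where "g j = y \<bullet> (A j *v y)" for j
  have Phi_w: "Phi A x = w \<bullet> y"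
    by (simp add: Phi_clifford_comb w_def M_def y_def z_def inner_commute)
  have Phi_g: "Phi A x = (\<Sum>j\<in>UNIV. z $ j * g j)"
    by (simp add: Phi_eq g_def y_def z_def zpart_def)
  have expand: "(\<Sum>k\<in>UNIV. \<Sum>l\<in>UNIV. pdiff k (Phi A) x * pdiff l (Phi A) x * pdiff k (pdiff l (Phi A)) x)
    = (\<Sum>a\<in>UNIV. \<Sum>b\<in>UNIV. (2 * w $ a) * (2 * w $ b) * (2 * M $ b $ a))
      + (\<Sum>a\<in>UNIV. \<Sum>j\<in>UNIV. (2 * w $ a) * g j * (2 * (A j *v y) $ a))
      + ((\<Sum>j\<in>UNIV. \<Sum>a\<in>UNIV. g j * (2 * w $ a) * (2 * (A j *v y) $ a))
      + (\<Sum>j\<in>UNIV. \<Sum>i\<in>UNIV. g j * g i * 0))"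
    unfolding w_def M_def g_def y_def z_def
    by (simp only: sum_UNIV_Plus sum.distrib pdiff_pdiff_Phi_Inl_Inl[OF symmetric]
        pdiff_pdiff_Phi_Inl_Inr[OF symmetric] pdiff_pdiff_Phi_Inr_Inl[OF symmetric]
        pdiff_pdiff_Phi_Inr_Inr, simp only: pdiff_Phi_Inl[OF symmetric] pdiff_Phi_Inr)
  have yy: "(\<Sum>a\<in>UNIV. \<Sum>b\<in>UNIV. (2 * w $ a) * (2 * w $ b) * (2 * M $ b $ a)) = 8 * (z \<bullet> z) * Phi A x"
  proof -
    have "(\<Sum>a\<in>UNIV. \<Sum>b\<in>UNIV. (2 * w $ a) * (2 * w $ b) * (2 * M $ b $ a)) = 8 * (w \<bullet> (M *v w))"
      by (simp add: sum_sum_matrix_bilinear[symmetric] sum_distrib_left mult_ac)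
    also have "M *v w = (z \<bullet> z) *\<^sub>R y"
      unfolding w_def M_def by (rule clifford_comb_square[OF assms])
    finally show ?thesis by (simp add: Phi_w)
  qed
  have yz: "(\<Sum>a\<in>UNIV. \<Sum>j\<in>UNIV. (2 * w $ a) * g j * (2 * (A j *v y) $ a)) = 4 * (y \<bullet> y) * Phi A x"
  proof -
    have "(\<Sum>a\<in>UNIV. \<Sum>j\<in>UNIV. (2 * w $ a) * g j * (2 * (A j *v y) $ a))
        = (\<Sum>j\<in>UNIV. 4 * g j * (w \<bullet> (A j *v y)))"
      by (subst sum.swap) (simp add: inner_vec_def sum_distrib_left mult_ac)
    also have "\<dots> = 4 * (y \<bullet> y) * (\<Sum>j\<in>UNIV. z $ j * g j)"
      by (simp add: w_def M_def clifford_comb_inner[OF assms] sum_distrib_left mult_ac)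
    finally show ?thesis by (simp add: Phi_g)
  qed
  have zy: "(\<Sum>j\<in>UNIV. \<Sum>a\<in>UNIV. g j * (2 * w $ a) * (2 * (A j *v y) $ a)) = 4 * (y \<bullet> y) * Phi A x"
    unfolding yz[symmetric] by (subst sum.swap) (simp add: mult_ac)
  have "(norm x)\<^sup>2 = y \<bullet> y + z \<bullet> z"
    by (simp add: norm_ypart_zpart y_def z_def power2_norm_eq_inner)
  then show ?thesis
    unfolding expand yy yz zy by (simp add: algebra_simps)
qed

theorem theorem1:
  fixes A :: "'k::finite \<Rightarrow> real^'n::finite^'n" and m q :: nat
  assumes "m \<ge> 1" and "q \<ge> 1"
    and "CARD('n) = 2 * m" and "CARD('k) = q + 1"
    and "clifford_system A"
  shows "Lop (Phi A) x = - 8 * (norm x)^2 * Phi A x"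
proof -
  \<comment> \<open>only q \<ge> 1 is needed: it supplies the second Clifford matrix that makes every A i traceless\<close>
  have "CARD('k) \<ge> 2"
    using assms(2,4) by simp
  then show ?thesis
    unfolding Lop_def laplacian_Phi[OF assms(5) \<open>CARD('k) \<ge> 2\<close>]
      Phi_gradient_Hessian_contraction[OF assms(5)]
    by simp
qed

end
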